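(* Let $k$ be an algebraically closed field of characteristic $0$, $R=k[x,y]$, and let $L=(x^d,x^{d-1}y^{a_1},\dots,xy^{a_{d-1}},y^{a_d})$ with $0=a_0<a_1<\dots<a_d$ be a lex-segment ideal, with $b_i=a_i-a_{i-1}$. If $b_2\ge b_3\ge\dots\ge b_d$, then $L^2=(x^d,x^{d-1}y^{a_1},y^{a_d})L$. In particular $\operatorname{depth}\operatorname{gr}_L(R)>0$.
   Context: $\operatorname{gr}_L(R)=\bigoplus_{n\ge0}L^n/L^{n+1}$. *)

theory Defs
  imports "HOL-Computational_Algebra.Polynomial"
begin

text \<open>The polynomial ring k[x,y] is modelled as ('k poly) poly: the outer
  variable is y, the inner variable is x.\<close>

definition varX :: "'k::comm_ring_1 poly poly" where
  "varX = [:[:0, 1:]:]"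

definition varY :: "'k::comm_ring_1 poly poly" where
  "varY = [:0, 1:]"

definition ideal_gen :: "'a::comm_ring_1 set \<Rightarrow> 'a set" where
  "ideal_gen S = {z. \<exists>F r. finite F \<and> F \<subseteq> S \<and> z = (\<Sum>s\<in>F. r s * s)}"

definition ideal_mult :: "'a::comm_ring_1 set \<Rightarrow> 'a set \<Rightarrow> 'a set" where
  "ideal_mult I J = ideal_gen {i * j | i j. i \<in> I \<and> j \<in> J}"

fun ideal_pow :: "'a::comm_ring_1 set \<Rightarrow> nat \<Rightarrow> 'a set" where
  "ideal_pow I 0 = UNIV"
| "ideal_pow I (Suc n) = ideal_mult I (ideal_pow I n)"

text \<open>Associated graded ring gr_L(R) = \<Oplus>_n L^n/L^(n+1).
  An element is represented by a family f with f n \<in> L^n, almost all zero;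
  it is zero in gr_L(R) iff f n \<in> L^(n+1) for all n.\<close>

definition gr_elem :: "'a::comm_ring_1 set \<Rightarrow> (nat \<Rightarrow> 'a) \<Rightarrow> bool" where
  "gr_elem L f \<longleftrightarrow> (\<forall>n. f n \<in> ideal_pow L n) \<and> (\<exists>N. \<forall>n\<ge>N. f n = 0)"

definition gr_is_zero :: "'a::comm_ring_1 set \<Rightarrow> (nat \<Rightarrow> 'a) \<Rightarrow> bool" where
  "gr_is_zero L f \<longleftrightarrow> (\<forall>n. f n \<in> ideal_pow L (Suc n))"

definition gr_mult :: "(nat \<Rightarrow> 'a::comm_ring_1) \<Rightarrow> (nat \<Rightarrow> 'a) \<Rightarrow> nat \<Rightarrow> 'a" where
  "gr_mult f g n = (\<Sum>i\<le>n. f i * g (n - i))"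

text \<open>depth gr_L(R) > 0 with respect to the maximal homogeneous ideal
  M/L \<oplus> L/L^2 \<oplus> ..., where M is the maximal ideal of R containing L:
  this ideal contains a nonzerodivisor of gr_L(R).\<close>

definition depth_gr_pos :: "'a::comm_ring_1 set \<Rightarrow> 'a set \<Rightarrow> bool" where
  "depth_gr_pos M L \<longleftrightarrow>
     (\<exists>z. gr_elem L z \<and> z 0 \<in> M \<and>
        (\<forall>w. gr_elem L w \<and> \<not> gr_is_zero L w \<longrightarrow> \<not> gr_is_zero L (gr_mult z w)))"

end

theory Submission
  imports Defs
begin

text \<open>All ideals involved are monomial ideals: \<open>x ^ P * y ^ Q\<close> lies in \<open>L ^ n\<close> iff some
  \<open>n\<close> generators \<open>x ^ (d - i) * y ^ (a i)\<close> have total \<open>x\<close>-degree at most \<open>P\<close> and total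
  \<open>y\<close>-degree at most \<open>Q\<close>. Concavity of \<open>a\<close> on \<open>{1..d}\<close> lets any two indices \<open>i, k\<close> be
  traded for \<open>j, l\<close> with \<open>j \<in> {0, 1, d}\<close>, \<open>j + l = i + k\<close> and \<open>a j + a l \<le> a i + a k\<close>,
  which is exactly \<open>L\<^sup>2 = J L\<close>. Iterating the trade pulls the index \<open>d\<close> out of any index
  multiset with large enough sum. With this, the monomials of \<open>u\<close> outside \<open>L ^ (n + 1)\<close> of
  largest and of smallest \<open>x\<close>-degree show that \<open>(x ^ d + y ^ a d) * u \<in> L ^ (n + 2)\<close> forces
  \<open>u \<in> L ^ (n + 1)\<close>: the initial form of \<open>x ^ d + y ^ a d\<close> is a nonzerodivisor on
  \<open>gr\<^sub>L(R)\<close>.\<close>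

lemma ideal_gen_in: "s \<in> S \<Longrightarrow> s \<in> ideal_gen S"
  unfolding ideal_gen_def
  by (rule CollectI, rule exI[of _ "{s}"], rule exI[of _ "\<lambda>_. 1"]) simp

lemma ideal_gen_zero: "0 \<in> ideal_gen S"
  unfolding ideal_gen_def by (rule CollectI, rule exI[of _ "{}"]) simp

lemma ideal_gen_add:
  assumes "x \<in> ideal_gen S" "y \<in> ideal_gen S"
  shows "x + y \<in> ideal_gen S"
proof -
  from assms obtain F1 r1 F2 r2 where h: "finite F1" "F1 \<subseteq> S" "x = (\<Sum>s\<in>F1. r1 s * s)"
     "finite F2" "F2 \<subseteq> S" "y = (\<Sum>s\<in>F2. r2 s * s)"
    unfolding ideal_gen_def by blast
  define r where "r s = (if s \<in> F1 then r1 s else 0) + (if s \<in> F2 then r2 s else 0)" for s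
  have "(\<Sum>s\<in>F1 \<union> F2. (if s \<in> F1 then r1 s else 0) * s) = x"
    unfolding h(3) by (rule sum.mono_neutral_cong_right) (use h in auto)
  moreover have "(\<Sum>s\<in>F1 \<union> F2. (if s \<in> F2 then r2 s else 0) * s) = y"
    unfolding h(6) by (rule sum.mono_neutral_cong_right) (use h in auto)
  ultimately have "x + y = (\<Sum>s\<in>F1 \<union> F2. r s * s)"
    by (simp add: r_def sum.distrib distrib_right del: sum.union_disjoint)
  then show ?thesis
    using h unfolding ideal_gen_def by (intro CollectI exI[of _ "F1 \<union> F2"] exI[of _ r]) simp
qed

lemma ideal_gen_mult:
  assumes "x \<in> ideal_gen S"
  shows "c * x \<in> ideal_gen S"
proof -
  from assms obtain F r where h: "finite F" "F \<subseteq> S" "x = (\<Sum>s\<in>F. r s * s)"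
    unfolding ideal_gen_def by blast
  have "c * x = (\<Sum>s\<in>F. (c * r s) * s)"
    unfolding h(3) by (simp add: sum_distrib_left mult.assoc)
  then show ?thesis
    using h(1,2) unfolding ideal_gen_def by (intro CollectI exI[of _ F] exI[of _ "\<lambda>s. c * r s"]) simp
qed

lemma ideal_gen_sum: "(\<And>i. i \<in> A \<Longrightarrow> f i \<in> ideal_gen S) \<Longrightarrow> sum f A \<in> ideal_gen S"
  by (induction A rule: infinite_finite_induct) (simp_all add: ideal_gen_zero ideal_gen_add)

lemma ideal_gen_least:
  assumes "S \<subseteq> I" "0 \<in> I" "\<And>x y. x \<in> I \<Longrightarrow> y \<in> I \<Longrightarrow> x + y \<in> I"
    "\<And>r x. x \<in> I \<Longrightarrow> r * x \<in> I"
  shows "ideal_gen S \<subseteq> I"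
proof
  fix z assume "z \<in> ideal_gen S"
  then obtain F r where "finite F" "F \<subseteq> S" "z = (\<Sum>s\<in>F. r s * s)"
    unfolding ideal_gen_def by blast
  moreover have "(\<Sum>s\<in>F. r s * s) \<in> I" if "finite F" "F \<subseteq> S" for F
    using that by (induction F rule: finite_induct) (use assms in auto)
  ultimately show "z \<in> I" by simp
qed

lemma ideal_gen_subset: "A \<subseteq> ideal_gen B \<Longrightarrow> ideal_gen A \<subseteq> ideal_gen B"
  by (rule ideal_gen_least) (simp_all add: ideal_gen_zero ideal_gen_add ideal_gen_mult)

lemma ideal_gen_mono: "A \<subseteq> B \<Longrightarrow> ideal_gen A \<subseteq> ideal_gen B"
  by (rule ideal_gen_subset) (meson ideal_gen_in subset_iff)

lemma ideal_gen_dvd: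
  assumes "\<And>x. x \<in> A \<Longrightarrow> \<exists>y\<in>B. y dvd x"
  shows "ideal_gen A \<subseteq> ideal_gen B"
proof (rule ideal_gen_subset, rule subsetI)
  fix x assume "x \<in> A"
  then obtain y k where "y \<in> B" "x = k * y"
    using assms by (metis dvd_def mult.commute)
  then show "x \<in> ideal_gen B" by (simp add: ideal_gen_in ideal_gen_mult)
qed

lemma ideal_gen_one: "ideal_gen {1} = UNIV"
  using ideal_gen_mult[OF ideal_gen_in[of 1 "{1}"]] by auto

lemma ideal_mult_gen:
  "ideal_mult (ideal_gen A) (ideal_gen B) = ideal_gen {a * b | a b. a \<in> A \<and> b \<in> B}"
proof
  show "ideal_gen {a * b | a b. a \<in> A \<and> b \<in> B} \<subseteq> ideal_mult (ideal_gen A) (ideal_gen B)"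
    unfolding ideal_mult_def by (rule ideal_gen_mono) (blast intro: ideal_gen_in)
next
  let ?P = "{a * b | a b. a \<in> A \<and> b \<in> B}"
  have "i * j \<in> ideal_gen ?P" if "i \<in> ideal_gen A" "j \<in> ideal_gen B" for i j
  proof -
    from that obtain F r G t where h: "finite F" "F \<subseteq> A" "i = (\<Sum>s\<in>F. r s * s)"
      "finite G" "G \<subseteq> B" "j = (\<Sum>u\<in>G. t u * u)"
      unfolding ideal_gen_def by blast
    have "i * j = (\<Sum>s\<in>F. \<Sum>u\<in>G. (r s * t u) * (s * u))"
      unfolding h(3,6) sum_distrib_right by (simp add: sum_distrib_left mult_ac)
    also have "\<dots> \<in> ideal_gen ?P"
      using h(2,5) by (blast intro: ideal_gen_sum ideal_gen_mult ideal_gen_in)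
    finally show ?thesis .
  qed
  then show "ideal_mult (ideal_gen A) (ideal_gen B) \<subseteq> ideal_gen ?P"
    unfolding ideal_mult_def by (intro ideal_gen_subset) blast
qed

lemma ideal_pow_one: "ideal_pow (ideal_gen S) 1 = ideal_gen S"
  using ideal_mult_gen[of S "{1}"] by (simp add: ideal_gen_one)

lemma mem_ideal_pow_one:
  assumes "x \<in> L"
  shows "x \<in> ideal_pow L 1"
proof -
  have "x * 1 \<in> {i * j | i j. i \<in> L \<and> j \<in> ideal_pow L 0}"
    using assms by (intro CollectI exI[of _ x] exI[of _ 1]) simp
  then show ?thesis
    unfolding One_nat_def ideal_pow.simps(2) ideal_mult_def by (simp add: ideal_gen_in)
qed

lemma zero_in_ideal_pow: "0 \<in> ideal_pow I n"
  by (cases n) (simp_all add: ideal_mult_def ideal_gen_zero)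

lemma ideal_pow_ideal_gen_image:
  "ideal_pow (ideal_gen (g ` I)) n =
     ideal_gen {prod_mset (image_mset g M) | M. size M = n \<and> set_mset M \<subseteq> I}"
proof (induction n)
  case 0
  then show ?case by (simp add: ideal_gen_one)
next
  case (Suc n)
  have "{x * y | x y. x \<in> g ` I \<and> y \<in> {prod_mset (image_mset g M) | M. size M = n \<and> set_mset M \<subseteq> I}}
      = {prod_mset (image_mset g M) | M. size M = Suc n \<and> set_mset M \<subseteq> I}"
  proof (intro equalityI subsetI)
    fix z assume "z \<in> {x * y | x y. x \<in> g ` I \<and> y \<in> {prod_mset (image_mset g M) | M. size M = n \<and> set_mset M \<subseteq> I}}"
    then obtain i M where "i \<in> I" "size M = n" "set_mset M \<subseteq> I" "z = g i * prod_mset (image_mset g M)"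
      by blast
    then show "z \<in> {prod_mset (image_mset g M) | M. size M = Suc n \<and> set_mset M \<subseteq> I}"
      by (intro CollectI exI[of _ "add_mset i M"]) auto
  next
    fix z assume "z \<in> {prod_mset (image_mset g M) | M. size M = Suc n \<and> set_mset M \<subseteq> I}"
    then obtain M where M: "size M = Suc n" "set_mset M \<subseteq> I" "z = prod_mset (image_mset g M)"
      by blast
    then obtain i N where "M = add_mset i N"
      by (metis size_eq_Suc_imp_eq_union)
    with M show "z \<in> {x * y | x y. x \<in> g ` I \<and> y \<in> {prod_mset (image_mset g M) | M. size M = n \<and> set_mset M \<subseteq> I}}"
      by auto
  qed
  then show ?case by (simp add: Suc ideal_mult_gen)
qed

definition xy_monom :: "nat \<Rightarrow> nat \<Rightarrow> 'k::comm_ring_1 poly poly" where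
  "xy_monom p q = monom (monom 1 p) q"

lemma varX_power_mult_varY_power: "(varX :: 'k::comm_ring_1 poly poly) ^ p * varY ^ q = xy_monom p q"
proof -
  have x: "varX = (monom (monom 1 1) 0 :: 'k poly poly)" and y: "varY = (monom 1 1 :: 'k poly poly)"
    by (simp_all add: varX_def varY_def monom_0 monom_Suc)
  show ?thesis
    unfolding x y monom_power by (simp add: xy_monom_def mult_monom)
qed

lemma xy_monom_mult: "xy_monom p q * xy_monom p' q' = xy_monom (p + p') (q + q')"
  by (simp add: xy_monom_def mult_monom)

lemma xy_monom_dvd: "p \<le> p' \<Longrightarrow> q \<le> q' \<Longrightarrow> xy_monom p q dvd xy_monom p' q'"
  by (metis dvd_triv_right le_add_diff_inverse2 xy_monom_mult)

lemma prod_mset_xy_monom: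
  "prod_mset (image_mset (\<lambda>i. xy_monom (f i) (g i)) M) =
     xy_monom (sum_mset (image_mset f M)) (sum_mset (image_mset g M))"
  by (induction M) (simp_all add: xy_monom_mult, simp add: xy_monom_def monom_0 one_pCons)

lemma coeff_xy_monom:
  "coeff (coeff (xy_monom p q) Q) P = (if P = p \<and> Q = q then 1 else 0)"
  by (simp add: xy_monom_def coeff_monom)

lemma coeff_xy_monom_mult:
  "coeff (coeff (xy_monom p q * u) Q) P =
     (if p \<le> P \<and> q \<le> Q then coeff (coeff u (Q - q)) (P - p) else 0)"
  by (simp add: xy_monom_def coeff_monom_mult)

lemma finite_xy_support: "finite {(P, Q). coeff (coeff u Q) P \<noteq> 0}"
proof (rule finite_subset)
  show "{(P, Q). coeff (coeff u Q) P \<noteq> 0} \<subseteq> (\<Union>Q\<le>degree u. {..degree (coeff u Q)} \<times> {Q})"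
  proof clarify
    fix P Q assume "coeff (coeff u Q) P \<noteq> 0"
    moreover from this have "coeff u Q \<noteq> 0" by auto
    ultimately show "(P, Q) \<in> (\<Union>Q\<le>degree u. {..degree (coeff u Q)} \<times> {Q})"
      by (auto intro: le_degree)
  qed
qed simp

lemma mem_monomial_ideal_iff:
  "f \<in> ideal_gen ((\<lambda>i. xy_monom (p i) (q i)) ` I) \<longleftrightarrow>
     (\<forall>P Q. coeff (coeff f Q) P \<noteq> 0 \<longrightarrow> (\<exists>i\<in>I. p i \<le> P \<and> q i \<le> Q))"
proof -
  let ?G = "(\<lambda>i. xy_monom (p i) (q i)) ` I"
  let ?R = "{f. \<forall>P Q. coeff (coeff f Q) P \<noteq> 0 \<longrightarrow> (\<exists>i\<in>I. p i \<le> P \<and> q i \<le> Q)}"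
  have "ideal_gen ?G \<subseteq> ?R"
  proof (rule ideal_gen_least)
    show "?G \<subseteq> ?R"
      by (auto simp: coeff_xy_monom split: if_splits)
    show "x + y \<in> ?R" if "x \<in> ?R" "y \<in> ?R" for x y
      using that by auto (metis add.right_neutral add_0)
    show "r * x \<in> ?R" if x: "x \<in> ?R" for r x
    proof (clarify, rule ccontr)
      fix P Q assume nz: "coeff (coeff (r * x) Q) P \<noteq> 0"
        and outside: "\<not> (\<exists>i\<in>I. p i \<le> P \<and> q i \<le> Q)"
      have "coeff (coeff x (Q - k)) (P - j) = 0" for j k
      proof (rule ccontr)
        assume "coeff (coeff x (Q - k)) (P - j) \<noteq> 0"
        then obtain i where "i \<in> I" "p i \<le> P - j" "q i \<le> Q - k"
          using x by blast
        then show False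
          using outside by (meson diff_le_self order.trans)
      qed
      then have "coeff (coeff (r * x) Q) P = 0"
        by (simp add: coeff_mult coeff_sum)
      with nz show False ..
    qed
  qed simp
  moreover have "f \<in> ideal_gen ?G" if f: "f \<in> ?R"
  proof -
    have term_in: "monom (monom (coeff (coeff f Q) P) P) Q \<in> ideal_gen ?G" for P Q
    proof (cases "coeff (coeff f Q) P = 0")
      case True
      then show ?thesis by (simp add: ideal_gen_zero)
    next
      case False
      then obtain i where i: "i \<in> I" "p i \<le> P" "q i \<le> Q"
        using f by blast
      have "monom (monom (coeff (coeff f Q) P) P) Q =
          monom (monom (coeff (coeff f Q) P) 0) 0 * (xy_monom (P - p i) (Q - q i) * xy_monom (p i) (q i))"
        using i by (simp add: xy_monom_mult xy_monom_def mult_monom)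
      also have "\<dots> \<in> ideal_gen ?G"
        using i(1) by (intro ideal_gen_mult ideal_gen_in) simp
      finally show ?thesis .
    qed
    have "f = (\<Sum>Q\<le>degree f. \<Sum>P\<le>degree (coeff f Q). monom (monom (coeff (coeff f Q) P) P) Q)"
      by (subst poly_as_sum_of_monoms[symmetric, of f])
         (simp add: poly_as_sum_of_monoms monom_sum[symmetric])
    also have "\<dots> \<in> ideal_gen ?G"
      by (intro ideal_gen_sum term_in)
    finally show ?thesis .
  qed
  ultimately show ?thesis
    by blast
qed

lemma coeff_binomial_mult:
  "coeff (coeff ((xy_monom d 0 + xy_monom 0 D) * u) Q) P =
     (if d \<le> P then coeff (coeff u Q) (P - d) else 0) + (if D \<le> Q then coeff (coeff u (Q - D)) P else 0)"
  by (simp add: distrib_right coeff_xy_monom_mult)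

lemma coeff_binomial_mult_at_max:
  assumes "0 < d" "coeff (coeff u q) p \<noteq> 0"
    and max: "\<And>P Q. coeff (coeff u Q) P \<noteq> 0 \<Longrightarrow> (P, Q) \<notin> E \<Longrightarrow> P \<le> p"
    and shift: "\<And>P Q. (P, Q) \<in> E \<Longrightarrow> (P, Q + D) \<in> E'"
    and "(p + d, q) \<notin> E'"
  shows "coeff (coeff ((xy_monom d 0 + xy_monom 0 D) * u) q) (p + d) \<noteq> 0"
proof -
  have "coeff (coeff u (q - D)) (p + d) = 0" if "D \<le> q"
  proof (rule ccontr)
    assume "coeff (coeff u (q - D)) (p + d) \<noteq> 0"
    moreover have "\<not> p + d \<le> p"
      using assms(1) by simp
    ultimately have "(p + d, q - D) \<in> E"
      using max by blast
    then show False
      using shift[of "p + d" "q - D"] that assms(5) by simp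
  qed
  then show ?thesis
    using assms(2) by (simp add: coeff_binomial_mult)
qed

lemma coeff_binomial_mult_at_min:
  assumes "0 < d" "coeff (coeff u q) p \<noteq> 0"
    and min: "\<And>P Q. coeff (coeff u Q) P \<noteq> 0 \<Longrightarrow> (P, Q) \<notin> E \<Longrightarrow> p \<le> P"
    and shift: "\<And>P Q. (P, Q) \<in> E \<Longrightarrow> (P + d, Q) \<in> E'"
    and "(p, q + D) \<notin> E'"
  shows "coeff (coeff ((xy_monom d 0 + xy_monom 0 D) * u) (q + D)) p \<noteq> 0"
proof -
  have "coeff (coeff u (q + D)) (p - d) = 0" if "d \<le> p"
  proof (rule ccontr)
    assume "coeff (coeff u (q + D)) (p - d) \<noteq> 0"
    moreover have "\<not> p \<le> p - d"
      using assms(1) that by simp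
    ultimately have "(p - d, q + D) \<in> E"
      using min by blast
    then show False
      using shift[of "p - d" "q + D"] that assms(5) by simp
  qed
  then show ?thesis
    using assms(2) by (simp add: coeff_binomial_mult)
qed

definition lex_gens :: "nat \<Rightarrow> (nat \<Rightarrow> nat) \<Rightarrow> 'k::comm_ring_1 poly poly set" where
  "lex_gens d a = (\<lambda>i. xy_monom (d - i) (a i)) ` {..d}"

text \<open>A multiset \<open>M\<close> of indices stands for the product of the generators
  \<open>x ^ (d - i) * y ^ (a i)\<close>, \<open>i \<in># M\<close>; so \<open>(P, Q) \<in> lex_pow_exps d a n\<close> says that
  \<open>x ^ P * y ^ Q\<close> is a multiple of one of the generators of \<open>L ^ n\<close>.\<close>

definition lex_pow_exps :: "nat \<Rightarrow> (nat \<Rightarrow> nat) \<Rightarrow> nat \<Rightarrow> (nat \<times> nat) set" where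
  "lex_pow_exps d a n = {(P, Q). \<exists>M. size M = n \<and> set_mset M \<subseteq> {..d} \<and>
     n * d \<le> P + sum_mset M \<and> sum_mset (image_mset a M) \<le> Q}"

lemma sum_mset_complement:
  "set_mset M \<subseteq> {..d} \<Longrightarrow> sum_mset (image_mset (\<lambda>i. d - i) M) + sum_mset M = size M * d"
  by (induction M) auto

lemma mem_lex_pow_iff:
  "f \<in> ideal_pow (ideal_gen (lex_gens d a)) n \<longleftrightarrow>
     (\<forall>P Q. coeff (coeff f Q) P \<noteq> 0 \<longrightarrow> (P, Q) \<in> lex_pow_exps d a n)"
proof -
  let ?I = "{M. size M = n \<and> set_mset M \<subseteq> {..d}}"
  let ?xexp = "\<lambda>M. sum_mset (image_mset (\<lambda>i. d - i) M)" and ?yexp = "\<lambda>M. sum_mset (image_mset a M)"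
  have gen: "ideal_pow (ideal_gen (lex_gens d a)) n = ideal_gen ((\<lambda>M. xy_monom (?xexp M) (?yexp M)) ` ?I)"
    unfolding lex_gens_def ideal_pow_ideal_gen_image by (auto simp: prod_mset_xy_monom intro!: arg_cong[of _ _ ideal_gen])
  have "?xexp M \<le> P \<longleftrightarrow> size M * d \<le> P + sum_mset M" if "set_mset M \<subseteq> {..d}" for M P
    using sum_mset_complement[OF that] by linarith
  then have exps: "(\<exists>M\<in>?I. ?xexp M \<le> P \<and> ?yexp M \<le> Q) \<longleftrightarrow> (P, Q) \<in> lex_pow_exps d a n" for P Q
    unfolding lex_pow_exps_def by auto
  show ?thesis
    unfolding gen mem_monomial_ideal_iff exps ..
qed

lemma lex_pow_exps_Suc:
  assumes "(P, Q) \<in> lex_pow_exps d a n" "i \<le> d"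
  shows "(P + (d - i), Q + a i) \<in> lex_pow_exps d a (Suc n)"
proof -
  obtain M where "size M = n" "set_mset M \<subseteq> {..d}" "n * d \<le> P + sum_mset M"
    "sum_mset (image_mset a M) \<le> Q"
    using assms(1) unfolding lex_pow_exps_def by auto
  then show ?thesis
    using assms(2) unfolding lex_pow_exps_def by (intro CollectI case_prodI exI[of _ "add_mset i M"]) auto
qed

lemma lex_pow_exps_shift_x:
  assumes notin: "(P, Q) \<notin> lex_pow_exps d a (Suc n)" and small: "Suc n * d \<le> P + n + 1"
  shows "(P + d, Q) \<notin> lex_pow_exps d a (Suc (Suc n))"
proof
  assume "(P + d, Q) \<in> lex_pow_exps d a (Suc (Suc n))"
  then obtain M where M: "size M = Suc (Suc n)" "set_mset M \<subseteq> {..d}"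
    "Suc (Suc n) * d \<le> P + d + sum_mset M" "sum_mset (image_mset a M) \<le> Q"
    unfolding lex_pow_exps_def by auto
  have "\<exists>i N. M = add_mset i N \<and> (i = 0 \<or> 0 \<notin># N)"
  proof (cases "0 \<in># M")
    case True
    then show ?thesis by (metis multi_member_split)
  next
    case False
    obtain i N where "M = add_mset i N"
      using M(1) by (metis size_eq_Suc_imp_eq_union)
    with False show ?thesis by auto
  qed
  then obtain i N where N: "M = add_mset i N" "i = 0 \<or> 0 \<notin># N"
    by blast
  have "Suc n * d \<le> P + sum_mset N"
  proof (cases "i = 0")
    case True
    then show ?thesis using M(3) N(1) by simp
  next
    case False
    have "size N \<le> sum_mset N" if "0 \<notin># N" for N :: "nat multiset"
      using that by (induction N) auto
    then show ?thesis using False N M(1) small by fastforce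
  qed
  then have "(P, Q) \<in> lex_pow_exps d a (Suc n)"
    using M N(1) unfolding lex_pow_exps_def by (intro CollectI case_prodI exI[of _ N]) auto
  with notin show False ..
qed

locale concave_steps =
  fixes d :: nat and a :: "nat \<Rightarrow> nat"
  assumes strict_mono_a: "\<And>i. i < d \<Longrightarrow> a i < a (Suc i)"
    and steps_antimono: "\<And>i j. 2 \<le> i \<Longrightarrow> i \<le> j \<Longrightarrow> j \<le> d \<Longrightarrow> a j - a (j - 1) \<le> a i - a (i - 1)"
begin

lemma concave_shift:
  assumes "1 \<le> k" "k \<le> j" "j + t \<le> d"
  shows "a (j + t) + a k \<le> a (k + t) + a j"
  using assms(3)
proof (induction t)
  case 0
  then show ?case by simp
next
  case (Suc t)
  have "a (j + Suc t) - a (j + t) \<le> a (k + Suc t) - a (k + t)"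
    using steps_antimono[of "k + Suc t" "j + Suc t"] assms(1,2) Suc.prems by simp
  moreover have "a (j + t) < a (j + Suc t)" "a (k + t) < a (k + Suc t)"
    using strict_mono_a[of "j + t"] strict_mono_a[of "k + t"] assms(2) Suc.prems by simp_all
  ultimately show ?case using Suc by simp
qed

lemma exchange_pair:
  assumes "i \<le> d" "k \<le> d"
  shows "\<exists>j l. j \<in> {0, 1, d} \<and> l \<le> d \<and> j + l = i + k \<and> a j + a l \<le> a i + a k"
proof -
  have "\<exists>j l. j \<in> {0, 1, d} \<and> l \<le> d \<and> j + l = i + k \<and> a j + a l \<le> a i + a k"
    if "i \<le> k" "k \<le> d" for i k
  proof -
    consider "i = 0" | "1 \<le> i" "i + k \<le> Suc d" | "Suc d < i + k"
      by linarith
    then show ?thesis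
    proof cases
      case 1
      then show ?thesis using that by auto
    next
      case 2
      have "a (k + (i - 1)) + a 1 \<le> a (1 + (i - 1)) + a k"
        using concave_shift[where k = 1 and j = k and t = "i - 1"] 2 that by simp
      then show ?thesis
        using 2 by (intro exI[of _ 1] exI[of _ "i + k - 1"]) (auto simp: add.commute)
    next
      case 3
      have "a (i + (d - i)) + a (i + k - d) \<le> a (i + k - d + (d - i)) + a i"
        using concave_shift[where k = "i + k - d" and j = i and t = "d - i"] 3 that by simp
      then show ?thesis
        using 3 that by (intro exI[of _ d] exI[of _ "i + k - d"]) auto
    qed
  qed
  from this[of i k] this[of k i] assms show ?thesis
    by (cases "i \<le> k") (auto simp: add.commute)
qed

lemma lex_square_reduction:
  assumes "1 \<le> d"
  shows "ideal_pow (ideal_gen (lex_gens d a)) 2 =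
           ideal_mult (ideal_gen ((\<lambda>i. xy_monom (d - i) (a i)) ` {0, 1, d})) (ideal_gen (lex_gens d a))"
proof -
  let ?g = "\<lambda>i. xy_monom (d - i) (a i)"
  have "ideal_pow (ideal_gen (lex_gens d a)) 2 =
      ideal_mult (ideal_gen (lex_gens d a)) (ideal_pow (ideal_gen (lex_gens d a)) 1)"
    using ideal_pow.simps(2)[of "ideal_gen (lex_gens d a)" 1] by (simp only: Suc_1)
  also have "\<dots> = ideal_gen {x * y | x y. x \<in> lex_gens d a \<and> y \<in> lex_gens d a}"
    by (simp only: ideal_pow_one ideal_mult_gen)
  finally have square: "ideal_pow (ideal_gen (lex_gens d a)) 2 = \<dots>" .
  have sub: "?g ` {0, 1, d} \<subseteq> lex_gens d a"
    using assms unfolding lex_gens_def by (intro image_mono) auto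
  have dvd: "\<exists>z\<in>{x * y | x y. x \<in> ?g ` {0, 1, d} \<and> y \<in> lex_gens d a}. z dvd ?g i * ?g k"
    if ik: "i \<le> d" "k \<le> d" for i k
  proof -
    obtain j l where jl: "j \<in> {0, 1, d}" "l \<le> d" "j + l = i + k" "a j + a l \<le> a i + a k"
      using exchange_pair[OF ik] by blast
    have "?g j * ?g l dvd ?g i * ?g k"
      unfolding xy_monom_mult using jl ik by (intro xy_monom_dvd) auto
    moreover have "?g j * ?g l \<in> {x * y | x y. x \<in> ?g ` {0, 1, d} \<and> y \<in> lex_gens d a}"
      using jl(1,2) unfolding lex_gens_def by (intro CollectI exI[of _ "?g j"] exI[of _ "?g l"]) auto
    ultimately show ?thesis ..
  qed
  show ?thesis
    unfolding square ideal_mult_gen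
  proof
    show "ideal_gen {x * y | x y. x \<in> lex_gens d a \<and> y \<in> lex_gens d a}
        \<subseteq> ideal_gen {x * y | x y. x \<in> ?g ` {0, 1, d} \<and> y \<in> lex_gens d a}"
    proof (rule ideal_gen_dvd)
      fix z assume "z \<in> {x * y | x y. x \<in> lex_gens d a \<and> y \<in> lex_gens d a}"
      then obtain i k where "i \<le> d" "k \<le> d" "z = ?g i * ?g k"
        unfolding lex_gens_def by auto
      then show "\<exists>y\<in>{x * y | x y. x \<in> ?g ` {0, 1, d} \<and> y \<in> lex_gens d a}. y dvd z"
        using dvd by blast
    qed
    show "ideal_gen {x * y | x y. x \<in> ?g ` {0, 1, d} \<and> y \<in> lex_gens d a}
        \<subseteq> ideal_gen {x * y | x y. x \<in> lex_gens d a \<and> y \<in> lex_gens d a}"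
      using sub by (intro ideal_gen_mono) blast
  qed
qed

lemma extract_top:
  assumes "set_mset M \<subseteq> {..d}" "M \<noteq> {#}" "size M + d \<le> sum_mset M + 1"
  shows "\<exists>M'. size M' + 1 = size M \<and> set_mset M' \<subseteq> {..d} \<and> sum_mset M \<le> sum_mset M' + d \<and>
           sum_mset (image_mset a M') + a d \<le> sum_mset (image_mset a M)"
  using assms
proof (induction "size M" arbitrary: M rule: less_induct)
  case less
  from less.prems(2) obtain i R where M: "M = add_mset i R"
    by (metis multiset_cases)
  show ?case
  proof (cases "R = {#}")
    case True
    then show ?thesis using less.prems M by (intro exI[of _ "{#}"]) auto
  next
    case False
    then obtain k N where R: "R = add_mset k N"
      by (metis multiset_cases)
    obtain j l where jl: "j \<in> {0, 1, d}" "l \<le> d" "j + l = i + k" "a j + a l \<le> a i + a k"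
      using exchange_pair[of i k] less.prems(1) M R by auto
    show ?thesis
    proof (cases "j = d")
      case True
      then show ?thesis
        using less.prems(1) M R jl by (intro exI[of _ "add_mset l N"]) auto
    next
      case False
      have "j \<le> d"
        using jl less.prems(1) M R by (cases "d = 0") auto
      let ?N = "add_mset l N"
      have "size ?N < size M" "set_mset ?N \<subseteq> {..d}" "?N \<noteq> {#}" "size ?N + d \<le> sum_mset ?N + 1"
        using less.prems M R jl False by auto
      then obtain N' where N': "size N' + 1 = size ?N" "set_mset N' \<subseteq> {..d}"
        "sum_mset ?N \<le> sum_mset N' + d" "sum_mset (image_mset a N') + a d \<le> sum_mset (image_mset a ?N)"
        using less.hyps by blast
      show ?thesis
        using M R jl N' \<open>j \<le> d\<close> by (intro exI[of _ "add_mset j N'"]) auto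
    qed
  qed
qed

lemma lex_pow_exps_shift_y:
  assumes notin: "(P, Q) \<notin> lex_pow_exps d a (Suc n)" and large: "P + n < Suc n * d"
  shows "(P, Q + a d) \<notin> lex_pow_exps d a (Suc (Suc n))"
proof
  assume "(P, Q + a d) \<in> lex_pow_exps d a (Suc (Suc n))"
  then obtain M where M: "size M = Suc (Suc n)" "set_mset M \<subseteq> {..d}"
    "Suc (Suc n) * d \<le> P + sum_mset M" "sum_mset (image_mset a M) \<le> Q + a d"
    unfolding lex_pow_exps_def by auto
  have "size M + d \<le> sum_mset M + 1" "M \<noteq> {#}"
    using M large by auto
  then obtain M' where "size M' + 1 = size M" "set_mset M' \<subseteq> {..d}"
    "sum_mset M \<le> sum_mset M' + d" "sum_mset (image_mset a M') + a d \<le> sum_mset (image_mset a M)"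
    using extract_top M(2) by blast
  then have "(P, Q) \<in> lex_pow_exps d a (Suc n)"
    using M unfolding lex_pow_exps_def by (intro CollectI case_prodI exI[of _ M']) auto
  with notin show False ..
qed

lemma binomial_mult_in_lex_pow_imp:
  fixes u :: "'k::comm_ring_1 poly poly"
  assumes "1 \<le> d" "a 0 = 0"
    and "(xy_monom d 0 + xy_monom 0 (a d)) * u \<in> ideal_pow (ideal_gen (lex_gens d a)) (Suc (Suc n))"
  shows "u \<in> ideal_pow (ideal_gen (lex_gens d a)) (Suc n)"
proof (rule ccontr)
  let ?E = "lex_pow_exps d a (Suc n)" and ?E' = "lex_pow_exps d a (Suc (Suc n))"
  let ?c = "\<lambda>P Q. coeff (coeff u Q) P"
  let ?w = "(xy_monom d 0 + xy_monom 0 (a d)) * u"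
  have w: "(P, Q) \<in> ?E'" if "coeff (coeff ?w Q) P \<noteq> 0" for P Q
    using assms(3) that unfolding mem_lex_pow_iff by blast
  define S where "S = {(P, Q). ?c P Q \<noteq> 0 \<and> (P, Q) \<notin> ?E}"
  assume "u \<notin> ideal_pow (ideal_gen (lex_gens d a)) (Suc n)"
  then have "S \<noteq> {}"
    unfolding S_def mem_lex_pow_iff by auto
  moreover have "finite S"
    unfolding S_def by (rule finite_subset[OF _ finite_xy_support[of u]]) auto
  ultimately have fin: "finite (fst ` S)" "fst ` S \<noteq> {}"
    by auto
  define pmax where "pmax = Max (fst ` S)"
  define pmin where "pmin = Min (fst ` S)"
  obtain qmax where qmax: "(pmax, qmax) \<in> S"
    using Max_in[OF fin] unfolding pmax_def by auto
  obtain qmin where qmin: "(pmin, qmin) \<in> S"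
    using Min_in[OF fin] unfolding pmin_def by auto
  have extremal: "pmin \<le> P" "P \<le> pmax" if "?c P Q \<noteq> 0" "(P, Q) \<notin> ?E" for P Q
  proof -
    have "P \<in> fst ` S"
      using that unfolding S_def by (auto intro: rev_image_eqI[of "(P, Q)"])
    then show "pmin \<le> P" "P \<le> pmax"
      unfolding pmin_def pmax_def using fin(1) by simp_all
  qed
  show False
  proof (cases "Suc n * d \<le> pmax + n + 1")
    case True
    have "(pmax + d, qmax) \<notin> ?E'"
      using lex_pow_exps_shift_x[OF _ True] qmax unfolding S_def by auto
    moreover have "coeff (coeff ?w qmax) (pmax + d) \<noteq> 0"
    proof (rule coeff_binomial_mult_at_max[where E = ?E and E' = ?E'])
      show "(P, Q + a d) \<in> ?E'" if "(P, Q) \<in> ?E" for P Q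
        using lex_pow_exps_Suc[OF that, of d] by simp
    qed (use assms(1) qmax extremal calculation in \<open>auto simp: S_def\<close>)
    ultimately show False
      using w by blast
  next
    case False
    have "pmin \<le> pmax"
      using extremal qmin unfolding S_def by auto
    then have "(pmin, qmin + a d) \<notin> ?E'"
      using lex_pow_exps_shift_y[of pmin qmin n] qmin False unfolding S_def by auto
    moreover have "coeff (coeff ?w (qmin + a d)) pmin \<noteq> 0"
    proof (rule coeff_binomial_mult_at_min[where E = ?E and E' = ?E'])
      show "(P + d, Q) \<in> ?E'" if "(P, Q) \<in> ?E" for P Q
        using lex_pow_exps_Suc[OF that, of 0] assms(2) by simp
    qed (use assms(1) qmin extremal calculation in \<open>auto simp: S_def\<close>)
    ultimately show False
      using w by blast
  qed
qed

end

lemma depth_gr_pos_if_initial_form_regular: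
  assumes "0 \<in> M" "c \<in> L"
    and regular: "\<And>n u. c * u \<in> ideal_pow L (Suc (Suc n)) \<Longrightarrow> u \<in> ideal_pow L (Suc n)"
  shows "depth_gr_pos M L"
proof -
  define z where "z n = (if n = 1 then c else 0)" for n :: nat
  have "z n \<in> ideal_pow L n" for n
    using mem_ideal_pow_one[OF assms(2)] by (simp add: z_def zero_in_ideal_pow)
  then have "gr_elem L z"
    unfolding gr_elem_def by (auto simp: z_def intro!: exI[of _ 2])
  moreover have "\<not> gr_is_zero L (gr_mult z w)" if nonzero: "\<not> gr_is_zero L w" for w
  proof
    assume zw: "gr_is_zero L (gr_mult z w)"
    obtain n where n: "w n \<notin> ideal_pow L (Suc n)"
      using nonzero unfolding gr_is_zero_def by blast
    have "gr_mult z w (Suc n) = (\<Sum>i\<le>Suc n. if i = 1 then c * w (Suc n - i) else 0)"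
      unfolding gr_mult_def z_def by (intro sum.cong) auto
    also have "\<dots> = c * w n"
      by simp
    finally have "c * w n \<in> ideal_pow L (Suc (Suc n))"
      using zw unfolding gr_is_zero_def by metis
    with regular n show False
      by blast
  qed
  ultimately show ?thesis
    unfolding depth_gr_pos_def using assms(1) by (auto simp: z_def)
qed

theorem proposition4p2:
  fixes d :: nat and a :: "nat \<Rightarrow> nat"
    and L :: "'k::{alg_closed_field, field_char_0} poly poly set"
  assumes "d \<ge> 1"
    and "a 0 = 0"
    and "\<And>i. i < d \<Longrightarrow> a i < a (Suc i)"
    and "L = ideal_gen {varX ^ (d - i) * varY ^ (a i) | i. i \<le> d}"
    and "\<And>i j. 2 \<le> i \<Longrightarrow> i \<le> j \<Longrightarrow> j \<le> d \<Longrightarrow>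
            a j - a (j - 1) \<le> a i - a (i - 1)"
  shows "ideal_pow L 2 =
           ideal_mult (ideal_gen {varX ^ d, varX ^ (d - 1) * varY ^ (a 1), varY ^ (a d)}) L
         \<and> depth_gr_pos (ideal_gen {varX, varY}) L"
proof -
  interpret concave_steps d a
    using assms(3,5) by unfold_locales
  let ?g = "\<lambda>i. xy_monom (d - i) (a i) :: 'k poly poly"
  have L: "L = ideal_gen (lex_gens d a)"
    unfolding assms(4) lex_gens_def varX_power_mult_varY_power by (rule arg_cong[where f = ideal_gen]) auto
  have J: "{varX ^ d, varX ^ (d - 1) * varY ^ (a 1), varY ^ (a d)} = ?g ` {0, 1, d}"
    using varX_power_mult_varY_power[where 'k = 'k, of d 0] varX_power_mult_varY_power[where 'k = 'k, of 0 "a d"]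
      assms(2) by (simp add: varX_power_mult_varY_power)
  have "xy_monom d 0 + xy_monom 0 (a d) \<in> L"
    unfolding L lex_gens_def using assms(2)
    by (intro ideal_gen_add ideal_gen_in) (auto intro: rev_image_eqI[of 0] rev_image_eqI[of d])
  then have "depth_gr_pos (ideal_gen {varX, varY}) L"
    by (rule depth_gr_pos_if_initial_form_regular[OF ideal_gen_zero])
       (unfold L, rule binomial_mult_in_lex_pow_imp[OF assms(1,2)])
  moreover have "ideal_pow L 2 = ideal_mult (ideal_gen (?g ` {0, 1, d})) L"
    unfolding L by (rule lex_square_reduction[OF assms(1)])
  ultimately show ?thesis
    unfolding J by simp
qed

end
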